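(* Consider the setting below. Let $\alpha_1,\beta_1>0$, let $p,q$ be odd positive integers with $0<q<2p$, let $r>0$, and let $\epsilon>0$ be the constant of the persistent-excitation property (i.e. $\hat\gamma_1(t)\ge\epsilon$ for all $t\ge T_1+r$ whenever $w\ne0$, with $\epsilon$ depending only on $r,B_{\min},w_{\min}$). Let $\hat\zeta$ evolve according to $$\dot{\hat\zeta}(t)=\begin{cases}-\hat\gamma_1(t)^{-1}\Big(\alpha_1 e_\gamma^{1+\frac{q}{p}}+\beta_1 e_\gamma^{1-\frac{q}{p}}+\hat\zeta(t)\big(|z_2(t)|-|z_2(t-r)|\big)-\big(|z_4(t)|-|z_4(t-r)|\big)\Big), & \text{if } \hat\gamma_1(t)>\epsilon,\\[2pt] -\alpha_1\hat\zeta(t)^{1+\frac{q}{p}}-\beta_1\hat\zeta(t)^{1-\frac{q}{p}}, & \text{otherwise},\end{cases}$$ where $e_\gamma(t)=\hat\zeta(t)\hat\gamma_1(t)-\hat\gamma_2(t)$, and set $\hat w(t)=|\hat\zeta(t)|^{1/2}$. Then there exists a time $T_{\max}$, independent of the initial conditions, such that $\hat w(t)=w$ for all $t\ge T_{\max}$.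
   Context: The signal is $y(t)=A+B\sin(wt+\phi_0)$, where $A>0$, $B>B_{\min}$, $\phi_0\in\mathbb{R}$ are unknown constants and the angular frequency satisfies $w=0$ or $w\ge w_{\min}$; $B_{\min}>0$, $w_{\min}>0$ are known constants. Assumption 1: there are a known $L>0$ and a known integer $m\ge4$ with $|y^{(m)}(t)|\le L$ for all $t$. The signals $z_2,z_4$ are the second and fourth states of the fixed-time arbitrary-order differentiator of Angulo, Moreno and Fridman (2013) (order $m$) driven by $y$; its properties used are: all its states are bounded, and there is a time $T_1$ independent of initial conditions such that $z_2(t)=y^{(1)}(t)$ and $z_4(t)=y^{(3)}(t)$ for all $t\ge T_1$. Also $z_2(t)=z_4(t)=0$ for $t\in[-r,0)$, and $\hat\gamma_1(t)=\int_{t-r}^{t}|z_2(\tau)|\,d\tau$, $\hat\gamma_2(t)=\int_{t-r}^{t}|z_4(\tau)|\,d\tau$. For odd $p$, a power $x^{k/p}$ with integer $k$ denotes the real $p$-th root of $x$ raised to the power $k$. The quantity $\hat\zeta$ estimates $\zeta=w^2$. *)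

theory Defs
  imports "HOL-Analysis.Analysis"
begin

definition sinusoid :: "real \<Rightarrow> real \<Rightarrow> real \<Rightarrow> real \<Rightarrow> real \<Rightarrow> real" where
  "sinusoid A B w phi0 = (\<lambda>t. A + B * sin (w * t + phi0))"

text \<open>For odd p, x^(k/p) = (real p-th root of x)^k, k an integer (possibly negative).\<close>
definition opow :: "nat \<Rightarrow> int \<Rightarrow> real \<Rightarrow> real" where
  "opow p k x = (root p x) powi k"

definition win_int :: "real \<Rightarrow> (real \<Rightarrow> real) \<Rightarrow> real \<Rightarrow> real" where
  "win_int r z t = integral {t - r..t} (\<lambda>\<tau>. \<bar>z \<tau>\<bar>)"

definition zeta_rhs ::
  "real \<Rightarrow> real \<Rightarrow> nat \<Rightarrow> nat \<Rightarrow> real \<Rightarrow> real \<Rightarrow> (real \<Rightarrow> real) \<Rightarrow> (real \<Rightarrow> real)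
   \<Rightarrow> real \<Rightarrow> real \<Rightarrow> real" where
  "zeta_rhs \<alpha>1 \<beta>1 p q r \<epsilon> z2 z4 t \<zeta> =
    (let g1 = win_int r z2 t; g2 = win_int r z4 t; e = \<zeta> * g1 - g2 in
     if g1 > \<epsilon> then
       - inverse g1 * (\<alpha>1 * opow p (int p + int q) e + \<beta>1 * opow p (int p - int q) e
                       + \<zeta> * (\<bar>z2 t\<bar> - \<bar>z2 (t - r)\<bar>) - (\<bar>z4 t\<bar> - \<bar>z4 (t - r)\<bar>))
     else - \<alpha>1 * opow p (int p + int q) \<zeta> - \<beta>1 * opow p (int p - int q) \<zeta>)"

text \<open>Properties of the fixed-time differentiator states z2, z4 used in the paper:
  bounded, (continuous for t >= 0, as states of the differentiator), zero on [-r,0),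
  and exact for t >= T1.\<close>
definition diff_states :: "(real \<Rightarrow> real) \<Rightarrow> real \<Rightarrow> real \<Rightarrow> (real \<Rightarrow> real) \<Rightarrow> (real \<Rightarrow> real) \<Rightarrow> bool" where
  "diff_states y r T1 z2 z4 \<longleftrightarrow>
     (\<exists>M. \<forall>t\<ge>-r. \<bar>z2 t\<bar> \<le> M \<and> \<bar>z4 t\<bar> \<le> M) \<and>
     continuous_on {0..} z2 \<and> continuous_on {0..} z4 \<and>
     (\<forall>t\<in>{-r..<0}. z2 t = 0 \<and> z4 t = 0) \<and>
     (\<forall>t\<ge>T1. z2 t = deriv y t \<and> z4 t = (deriv ^^ 3) y t)"

definition car_solution :: "(real \<Rightarrow> real \<Rightarrow> real) \<Rightarrow> (real \<Rightarrow> real) \<Rightarrow> bool" where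
  "car_solution f \<zeta> \<longleftrightarrow>
     (\<forall>t\<ge>0. (\<lambda>s. f s (\<zeta> s)) absolutely_integrable_on {0..t} \<and>
             ((\<lambda>s. f s (\<zeta> s)) has_integral (\<zeta> t - \<zeta> 0)) {0..t})"

end

theory Submission
  imports Defs
begin

(* For t >= T1 + r the differentiator states are exact on the whole window, so gamma1 = Gamma and
   gamma2 = w^2 Gamma, with Gamma the window integral of |y'|.  If w <> 0, persistent excitation
   gives Gamma > eps and the error e = (zeta - w^2) Gamma obeys
   e' = -(alpha1 |e|^(1+q/p) + beta1 |e|^(1-q/p)); if w = 0, zeta itself obeys this equation.
   Along this flow arctan (sqrt (alpha1/beta1) |e|^(q/p)) / ((q/p) sqrt (alpha1 beta1)) moves with
   slope exactly -sgn e while staying in [0, pi / (2 (q/p) sqrt (alpha1 beta1))), so e vanishes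
   after that time, whatever the initial condition. *)

lemma has_real_derivative_abs:
  fixes x :: real
  assumes "x \<noteq> 0"
  shows "(abs has_real_derivative sgn x) (at x)"
proof -
  have "norm = (abs :: real \<Rightarrow> real)"
    by (simp add: fun_eq_iff)
  with has_derivative_norm[OF assms] show ?thesis
    by (simp add: has_field_derivative_def mult_commute_abs)
qed

lemma increment_of_constant_derivative:
  fixes V :: "real \<Rightarrow> real"
  assumes "a < b" and "continuous_on {a..b} V"
    and "\<And>x. a < x \<Longrightarrow> x < b \<Longrightarrow> (V has_real_derivative c) (at x)"
  shows "V b - V a = (b - a) * c"
proof -
  have "V b - c * b = V a - c * a"
    by (rule DERIV_isconst_end[where f = "\<lambda>x. V x - c * x"])
       (use assms in \<open>auto intro!: continuous_intros derivative_eq_intros\<close>)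
  then show ?thesis
    by (simp add: algebra_simps)
qed

lemma last_zero_before:
  fixes e :: "real \<Rightarrow> real"
  assumes cont: "continuous_on {a..b} e" and "a < b" and "e b \<noteq> 0"
  obtains c where "a \<le> c" "c < b" "c = a \<or> e c = 0"
    and "\<And>x. c < x \<Longrightarrow> x \<le> b \<Longrightarrow> sgn (e x) = sgn (e b)"
proof -
  define Z where "Z = insert a {x \<in> {a..b}. e x = 0}"
  have "closed {x \<in> {a..b}. e x = 0}"
    using continuous_closed_preimage_constant[OF cont] by simp
  then have "compact Z"
    unfolding Z_def compact_eq_bounded_closed
    by (auto intro: bounded_subset[of "{a..b}"])
  then obtain c where c: "c \<in> Z" and c_max: "\<And>x. x \<in> Z \<Longrightarrow> x \<le> c"
    using compact_attains_sup[of Z] unfolding Z_def by blast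
  have nonzero: "e x \<noteq> 0" if "c < x" "x \<le> b" for x
    using c_max[of x] c that unfolding Z_def by force
  have "sgn (e x) = sgn (e b)" if x: "c < x" "x \<le> b" for x
  proof (rule ccontr)
    assume "sgn (e x) \<noteq> sgn (e b)"
    then have "e x \<le> 0 \<and> 0 \<le> e b \<or> e b \<le> 0 \<and> 0 \<le> e x"
      by (auto simp: sgn_if split: if_splits)
    moreover have "continuous_on {x..b} e"
      using continuous_on_subset[OF cont] c x unfolding Z_def by auto
    ultimately obtain y where "x \<le> y" "y \<le> b" "e y = 0"
      using IVT'[of e x 0 b] IVT2'[of e b 0 x] x by blast
    then show False
      using nonzero x by force
  qed
  moreover have "a \<le> c" "c < b" "c = a \<or> e c = 0"
    using c \<open>a < b\<close> \<open>e b \<noteq> 0\<close> unfolding Z_def by (auto simp: order.order_iff_strict)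
  ultimately show ?thesis
    using that by blast
qed

lemma first_zero_after:
  fixes e :: "real \<Rightarrow> real"
  assumes cont: "continuous_on {a..b} e" and "a < b" and "e a \<noteq> 0"
  obtains c where "a < c" "c \<le> b" "c = b \<or> e c = 0"
    and "\<And>x. a \<le> x \<Longrightarrow> x < c \<Longrightarrow> sgn (e x) = sgn (e a)"
proof -
  have "continuous_on {-b..-a} (\<lambda>x. e (- x))"
    by (rule continuous_on_compose2[OF cont]) (auto intro: continuous_intros)
  then obtain c where "- b \<le> c" "c < - a" "c = - b \<or> e (- c) = 0"
    and "\<And>x. c < x \<Longrightarrow> x \<le> - a \<Longrightarrow> sgn (e (- x)) = sgn (e a)"
    using last_zero_before[of "- b" "- a" "\<lambda>x. e (- x)"] assms by auto
  then show ?thesis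
    using that[of "- c"] by (metis add.inverse_inverse minus_less_iff neg_le_iff_le)
qed

lemma zero_after_settling_time:
  fixes e V :: "real \<Rightarrow> real"
  assumes cont_e: "continuous_on {T0..} e" and cont_V: "continuous_on {T0..} V"
    and deriv_V: "\<And>x. x > T0 \<Longrightarrow> e x \<noteq> 0 \<Longrightarrow> (V has_real_derivative - sgn (e x)) (at x)"
    and V_range: "\<And>x. x \<ge> T0 \<Longrightarrow> 0 \<le> V x \<and> V x < Tf"
    and V_zero: "\<And>x. x \<ge> T0 \<Longrightarrow> e x = 0 \<Longrightarrow> V x = 0"
    and t: "t \<ge> T0 + Tf"
  shows "e t = 0"
proof (rule ccontr)
  assume et: "e t \<noteq> 0"
  have "Tf > 0"
    using V_range[of T0] by auto
  have cont: "continuous_on {x..y} e" "continuous_on {x..y} V" if "T0 \<le> x" for x y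
    using continuous_on_subset[OF cont_e] continuous_on_subset[OF cont_V] that by auto
  have increment: "V y - V x = (y - x) * - sgn (e t)"
    if "T0 \<le> x" "x < y" "\<And>z. x < z \<Longrightarrow> z < y \<Longrightarrow> sgn (e z) = sgn (e t)" for x y
  proof (rule increment_of_constant_derivative[OF \<open>x < y\<close> cont(2)[OF \<open>T0 \<le> x\<close>]])
    fix z assume "x < z" "z < y"
    with that et have "e z \<noteq> 0" "sgn (e z) = sgn (e t)"
      by (metis sgn_0_0)+
    with deriv_V[of z] \<open>T0 \<le> x\<close> \<open>x < z\<close> show "(V has_real_derivative - sgn (e t)) (at z)"
      by simp
  qed
  show False
  proof (cases "e t > 0")
    case True
    obtain c where c: "t - Tf \<le> c" "c < t" "c = t - Tf \<or> e c = 0"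
      and sign: "\<And>x. c < x \<Longrightarrow> x \<le> t \<Longrightarrow> sgn (e x) = sgn (e t)"
      using last_zero_before[OF cont(1) _ et, of "t - Tf"] \<open>Tf > 0\<close> t by auto
    have "V t - V c = (t - c) * - 1"
      using increment[of c t] sign c t True by simp
    then show False
      using c V_range[of c] V_range[of t] V_zero[of c] t by auto
  next
    case False
    obtain c where c: "t < c" "c \<le> t + Tf" "c = t + Tf \<or> e c = 0"
      and sign: "\<And>x. t \<le> x \<Longrightarrow> x < c \<Longrightarrow> sgn (e x) = sgn (e t)"
      using first_zero_after[OF cont(1) _ et, of "t + Tf"] \<open>Tf > 0\<close> t by auto
    have "V c - V t = (c - t) * 1"
      using increment[of t c] sign c t False et by simp
    then show False
      using c V_range[of c] V_range[of t] V_zero[of c] t \<open>Tf > 0\<close> by auto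
  qed
qed

(* The settling function is the integral of dz / (a z^(1+s) + b z^(1-s)) over [0, |x|]: the time the
   flow e' = -(a |e|^(1+s) + b |e|^(1-s)) needs to bring x to 0. *)
definition settling_fun :: "real \<Rightarrow> real \<Rightarrow> real \<Rightarrow> real \<Rightarrow> real" where
  "settling_fun a b s x = arctan (sqrt (a / b) * \<bar>x\<bar> powr s) / (s * sqrt (a * b))"

lemma settling_fun_zero [simp]: "settling_fun a b s 0 = 0"
  by (simp add: settling_fun_def)

lemma settling_fun_bounds:
  assumes "a > 0" "b > 0" "s > 0"
  shows "0 \<le> settling_fun a b s x" "settling_fun a b s x < pi / (2 * s * sqrt (a * b))"
proof -
  have "s * sqrt (a * b) > 0"
    using assms by simp
  moreover have "0 \<le> arctan (sqrt (a / b) * \<bar>x\<bar> powr s)"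
    using arctan_monotone'[of 0 "sqrt (a / b) * \<bar>x\<bar> powr s"] assms by simp
  ultimately show "0 \<le> settling_fun a b s x"
    unfolding settling_fun_def by simp
  from divide_strict_right_mono[OF arctan_ubound \<open>s * sqrt (a * b) > 0\<close>]
  show "settling_fun a b s x < pi / (2 * s * sqrt (a * b))"
    unfolding settling_fun_def by (simp add: mult.assoc)
qed

lemma continuous_on_settling_fun:
  assumes "a > 0" "b > 0" "s > 0"
  shows "continuous_on UNIV (settling_fun a b s)"
  unfolding settling_fun_def
  by (intro continuous_intros continuous_on_powr') (use assms in auto)

lemma settling_fun_has_derivative:
  assumes "a > 0" "b > 0" "s > 0" "x \<noteq> 0"
  shows "(settling_fun a b s has_real_derivative
           sgn x / (a * \<bar>x\<bar> powr (1 + s) + b * \<bar>x\<bar> powr (1 - s))) (at x)"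
proof -
  define u where "u = \<bar>x\<bar>"
  have u: "u > 0"
    using assms u_def by simp
  have "((\<lambda>y. \<bar>y\<bar> powr s) has_real_derivative s * u powr (s - 1) * sgn x) (at x)"
    using DERIV_fun_powr[OF has_real_derivative_abs[OF \<open>x \<noteq> 0\<close>], of s] u u_def by simp
  from DERIV_chain2[OF DERIV_arctan DERIV_cmult[OF this, of "sqrt (a / b)"]]
  have "((\<lambda>y. arctan (sqrt (a / b) * \<bar>y\<bar> powr s)) has_real_derivative
          inverse (1 + (sqrt (a / b) * u powr s)\<^sup>2) * (sqrt (a / b) * (s * u powr (s - 1) * sgn x))) (at x)"
    by (simp add: u_def power2_eq_square)
  from DERIV_cdivide[OF this, of "s * sqrt (a * b)"]
  have "(settling_fun a b s has_real_derivative
          inverse (1 + (sqrt (a / b) * u powr s)\<^sup>2) * (sqrt (a / b) * (s * u powr (s - 1) * sgn x))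
          / (s * sqrt (a * b))) (at x)"
    unfolding settling_fun_def[abs_def] .
  moreover have "inverse (1 + (sqrt (a / b) * u powr s)\<^sup>2) * (sqrt (a / b) * (s * u powr (s - 1) * sgn x))
          / (s * sqrt (a * b)) = sgn x * u powr (s - 1) / (b + a * (u powr s)\<^sup>2)"
  proof -
    define c where "c = sqrt (a / b)"
    have c: "c > 0" "c\<^sup>2 = a / b" "sqrt (a * b) = b * c"
      using assms by (simp_all add: c_def real_sqrt_divide real_sqrt_mult field_simps)
    have "1 + (c * u powr s)\<^sup>2 > 0"
      by (simp add: add_pos_nonneg)
    moreover have "inverse D * (c * (s * M * g)) / (s * (b * c)) = g * M / (b * D)" if "D \<noteq> 0" for D M g
      using that c assms by (simp add: field_simps)
    ultimately have "inverse (1 + (c * u powr s)\<^sup>2) * (c * (s * u powr (s - 1) * sgn x)) / (s * sqrt (a * b))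
        = sgn x * u powr (s - 1) / (b * (1 + (c * u powr s)\<^sup>2))"
      unfolding \<open>sqrt (a * b) = b * c\<close> by simp
    also have "b * (1 + (c * u powr s)\<^sup>2) = b + a * (u powr s)\<^sup>2"
      using c assms by (simp add: power_mult_distrib field_simps)
    finally show ?thesis
      unfolding c_def .
  qed
  moreover have "a * u powr (1 + s) + b * u powr (1 - s) = (b + a * (u powr s)\<^sup>2) / u powr (s - 1)"
    using u by (simp add: field_simps powr_add[symmetric] power2_eq_square)
  ultimately show ?thesis
    using u u_def by simp
qed

lemma fixed_time_zero:
  fixes e :: "real \<Rightarrow> real"
  assumes "a > 0" "b > 0" "s > 0" and cont: "continuous_on {T0..} e"
    and deriv_e: "\<And>x. x > T0 \<Longrightarrow> e x \<noteq> 0 \<Longrightarrow>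
       (e has_real_derivative - (a * \<bar>e x\<bar> powr (1 + s) + b * \<bar>e x\<bar> powr (1 - s))) (at x)"
    and "t \<ge> T0 + pi / (2 * s * sqrt (a * b))"
  shows "e t = 0"
proof (rule zero_after_settling_time[of T0 e "\<lambda>x. settling_fun a b s (e x)"
      "pi / (2 * s * sqrt (a * b))"])
  show "continuous_on {T0..} (\<lambda>x. settling_fun a b s (e x))"
    using continuous_on_compose2[OF continuous_on_settling_fun cont] assms by auto
  fix x assume "x > T0" "e x \<noteq> 0"
  define rate where "rate = a * \<bar>e x\<bar> powr (1 + s) + b * \<bar>e x\<bar> powr (1 - s)"
  have "rate > 0"
    using assms \<open>e x \<noteq> 0\<close> by (simp add: rate_def add_pos_pos)
  moreover note DERIV_chain2[OF settling_fun_has_derivative[OF assms(1-3) \<open>e x \<noteq> 0\<close>]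
      deriv_e[OF \<open>x > T0\<close> \<open>e x \<noteq> 0\<close>]]
  ultimately show "((\<lambda>x. settling_fun a b s (e x)) has_real_derivative - sgn (e x)) (at x)"
    by (simp flip: rate_def)
qed (use assms settling_fun_bounds in auto)

lemma car_solution_integral_form:
  assumes sol: "car_solution f \<zeta>" and "t > 0"
  shows "(\<lambda>s. f s (\<zeta> s)) integrable_on {0..t + 1}"
    and "eventually (\<lambda>x. \<zeta> x = \<zeta> 0 + integral {0..x} (\<lambda>s. f s (\<zeta> s))) (nhds t)"
proof -
  have "((\<lambda>s. f s (\<zeta> s)) has_integral (\<zeta> x - \<zeta> 0)) {0..x}" if "x \<ge> 0" for x
    using sol that unfolding car_solution_def by simp
  note sol_integral = this
  show "(\<lambda>s. f s (\<zeta> s)) integrable_on {0..t + 1}"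
    using sol_integral[of "t + 1"] \<open>t > 0\<close> by (auto intro: has_integral_integrable)
  have "eventually (\<lambda>x. x > 0) (nhds t)"
    using eventually_nhds_in_open[of "{0<..}" t] \<open>t > 0\<close> by simp
  then show "eventually (\<lambda>x. \<zeta> x = \<zeta> 0 + integral {0..x} (\<lambda>s. f s (\<zeta> s))) (nhds t)"
  proof eventually_elim
    case (elim x)
    with sol_integral[of x] show ?case
      by (simp add: integral_unique)
  qed
qed

lemma car_solution_isCont:
  assumes sol: "car_solution f \<zeta>" and "t > 0"
  shows "isCont \<zeta> t"
proof -
  have "continuous_on {0..t + 1} (\<lambda>x. integral {0..x} (\<lambda>s. f s (\<zeta> s)))"
    by (rule indefinite_integral_continuous_1[OF car_solution_integral_form(1)[OF assms]])
  then have "isCont (\<lambda>x. integral {0..x} (\<lambda>s. f s (\<zeta> s))) t"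
    by (rule continuous_on_interior) (use \<open>t > 0\<close> in \<open>simp add: interior_atLeastAtMost_real\<close>)
  then have "isCont (\<lambda>x. \<zeta> 0 + integral {0..x} (\<lambda>s. f s (\<zeta> s))) t"
    by (intro isCont_add continuous_const)
  with isCont_cong[OF car_solution_integral_form(2)[OF assms]] show ?thesis
    by simp
qed

lemma car_solution_has_derivative:
  assumes sol: "car_solution f \<zeta>" and "t > 0" and cont: "isCont (\<lambda>s. f s (\<zeta> s)) t"
  shows "(\<zeta> has_real_derivative f t (\<zeta> t)) (at t)"
proof -
  have "t \<in> interior {0..t + 1}"
    using \<open>t > 0\<close> by (simp add: interior_atLeastAtMost_real)
  then have at_t: "at t within {0..t + 1} = at t"
    by (rule at_within_interior)
  have "((\<lambda>x. integral {0..x} (\<lambda>s. f s (\<zeta> s))) has_vector_derivative f t (\<zeta> t))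
      (at t within {0..t + 1})"
    using integral_has_vector_derivative_continuous_at[OF car_solution_integral_form(1)[OF assms(1,2)] _ finite.emptyI
        continuous_at_imp_continuous_within[OF cont]] \<open>t > 0\<close>
    unfolding Diff_empty by simp
  then have "((\<lambda>x. integral {0..x} (\<lambda>s. f s (\<zeta> s))) has_real_derivative f t (\<zeta> t)) (at t)"
    unfolding at_t by (simp add: has_real_derivative_iff_has_vector_derivative)
  from DERIV_add[OF DERIV_const[of "\<zeta> 0"] this]
  have "((\<lambda>x. \<zeta> 0 + integral {0..x} (\<lambda>s. f s (\<zeta> s))) has_real_derivative f t (\<zeta> t)) (at t)"
    by simp
  then show ?thesis
    using DERIV_cong_ev[OF refl car_solution_integral_form(2)[OF assms(1,2)] refl] by simp
qed

lemma integral_has_real_derivative_at: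
  fixes h :: "real \<Rightarrow> real"
  assumes "continuous_on UNIV h" and "c < x"
  shows "((\<lambda>y. integral {c..y} h) has_real_derivative h x) (at x)"
proof -
  have "x \<in> interior {c..x + 1}"
    using \<open>c < x\<close> by (simp add: interior_atLeastAtMost_real)
  then have "at x within {c..x + 1} = at x"
    by (rule at_within_interior)
  with integral_has_real_derivative[of c "x + 1" h x] assms show ?thesis
    by (auto intro: continuous_on_subset)
qed

lemma window_integral_has_derivative:
  fixes h :: "real \<Rightarrow> real"
  assumes cont: "continuous_on UNIV h" and "r \<ge> 0"
  shows "((\<lambda>y. integral {y - r..y} h) has_real_derivative h x - h (x - r)) (at x)"
proof -
  define c where "c = x - r - 1"
  have "((\<lambda>y. y - r) has_real_derivative 1) (at x)"
    by (auto intro!: derivative_eq_intros)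
  from DERIV_chain2[OF integral_has_real_derivative_at[OF cont, of c "x - r"] this]
  have "((\<lambda>y. integral {c..y - r} h) has_real_derivative h (x - r)) (at x)"
    by (simp add: c_def)
  with integral_has_real_derivative_at[OF cont, of c x] \<open>r \<ge> 0\<close>
  have diff: "((\<lambda>y. integral {c..y} h - integral {c..y - r} h) has_real_derivative h x - h (x - r)) (at x)"
    by (auto intro!: DERIV_diff simp: c_def)
  have "eventually (\<lambda>y. integral {y - r..y} h = integral {c..y} h - integral {c..y - r} h) (nhds x)"
  proof -
    have "eventually (\<lambda>y. y > x - 1) (nhds x)"
      using eventually_nhds_in_open[of "{x - 1<..}" x] by simp
    then show ?thesis
    proof eventually_elim
      case (elim y)
      have "h integrable_on {c..y}"
        by (rule integrable_continuous_real) (rule continuous_on_subset[OF cont], simp)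
      with Henstock_Kurzweil_Integration.integral_combine[of c "y - r" y h] elim \<open>r \<ge> 0\<close> show ?case
        unfolding c_def by simp
    qed
  qed
  from DERIV_cong_ev[OF refl this refl] diff show ?thesis
    by simp
qed

lemma opow_even_eq_powr:
  assumes "odd p" "even k" "x \<noteq> 0"
  shows "opow p k x = \<bar>x\<bar> powr (real_of_int k / real p)"
proof -
  have "p > 0"
    using \<open>odd p\<close> by (cases p) auto
  have "root p x powi k = \<bar>root p x\<bar> powi k"
    using power_int_minus_left_even[OF \<open>even k\<close>, of "root p x"] by (simp add: abs_if)
  also have "\<bar>root p x\<bar> = \<bar>x\<bar> powr (1 / real p)"
    using \<open>p > 0\<close> \<open>x \<noteq> 0\<close> by (simp add: real_root_abs[symmetric] root_powr_inverse)
  also have "(\<bar>x\<bar> powr (1 / real p)) powi k = (\<bar>x\<bar> powr (1 / real p)) powr real_of_int k"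
    using \<open>x \<noteq> 0\<close> by (simp add: powr_real_of_int')
  also have "\<dots> = \<bar>x\<bar> powr (real_of_int k / real p)"
    by (simp add: powr_powr)
  finally show ?thesis
    unfolding opow_def .
qed

lemma isCont_opow:
  assumes "odd p" "x \<noteq> 0"
  shows "isCont (opow p k) x"
proof -
  have "root p x \<noteq> 0"
    using assms by (cases p) auto
  then show ?thesis
    unfolding opow_def by (intro continuous_at_within_power_int isCont_real_root) auto
qed

definition fixed_time_rate :: "real \<Rightarrow> real \<Rightarrow> nat \<Rightarrow> nat \<Rightarrow> real \<Rightarrow> real" where
  "fixed_time_rate \<alpha> \<beta> p q x = \<alpha> * opow p (int p + int q) x + \<beta> * opow p (int p - int q) x"

lemma fixed_time_rate_eq_powr:
  assumes "odd p" "odd q" "x \<noteq> 0"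
  shows "fixed_time_rate \<alpha> \<beta> p q x = \<alpha> * \<bar>x\<bar> powr (1 + q / p) + \<beta> * \<bar>x\<bar> powr (1 - q / p)"
proof -
  have "p > 0"
    using \<open>odd p\<close> by (cases p) auto
  then have "real_of_int (int p + int q) / real p = 1 + q / p"
    "real_of_int (int p - int q) / real p = 1 - q / p"
    by (simp_all add: field_simps)
  moreover have "even (int p + int q)" "even (int p - int q)"
    using assms by auto
  ultimately show ?thesis
    unfolding fixed_time_rate_def using opow_even_eq_powr[OF \<open>odd p\<close> _ \<open>x \<noteq> 0\<close>] by simp
qed

lemma isCont_fixed_time_rate:
  assumes "odd p" "x \<noteq> 0"
  shows "isCont (fixed_time_rate \<alpha> \<beta> p q) x"
  unfolding fixed_time_rate_def using isCont_opow[OF assms] by (intro continuous_intros) auto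

lemma deriv_sinusoid: "deriv (sinusoid A B w \<phi>) t = B * w * cos (w * t + \<phi>)"
  unfolding sinusoid_def by (rule DERIV_imp_deriv) (auto intro!: derivative_eq_intros)

lemma abs_deriv3_sinusoid:
  "\<bar>(deriv ^^ 3) (sinusoid A B w \<phi>) t\<bar> = w\<^sup>2 * \<bar>deriv (sinusoid A B w \<phi>) t\<bar>"
proof -
  have "(deriv ^^ 3) (sinusoid A B w \<phi>) = deriv (deriv (\<lambda>t. B * w * cos (w * t + \<phi>)))"
    by (simp add: numeral_3_eq_3 deriv_sinusoid[abs_def])
  also have "deriv (\<lambda>t. B * w * cos (w * t + \<phi>)) = (\<lambda>t. - (B * w * w) * sin (w * t + \<phi>))"
    by (intro ext DERIV_imp_deriv) (auto intro!: derivative_eq_intros)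
  also have "deriv (\<lambda>t. - (B * w * w) * sin (w * t + \<phi>)) = (\<lambda>t. - w\<^sup>2 * (B * w * cos (w * t + \<phi>)))"
    by (intro ext DERIV_imp_deriv) (auto intro!: derivative_eq_intros simp: power2_eq_square)
  finally show ?thesis
    by (simp add: deriv_sinusoid abs_mult)
qed

lemma win_int_deriv_sinusoid_scale:
  "win_int r (deriv (sinusoid A B w \<phi>)) t = \<bar>B\<bar> * win_int r (deriv (sinusoid A' 1 w \<phi>)) t"
  unfolding win_int_def deriv_sinusoid by (simp add: abs_mult mult.assoc)

(* Persistent excitation bounds the window integral only non-strictly; applying it to an amplitude
   strictly between Bmin and B gives the strict bound, as the window integral is proportional to |B|. *)
lemma win_int_deriv_sinusoid_gt:
  assumes PE: "\<forall>A' B' w' \<phi>'. A' > 0 \<longrightarrow> B' > Bmin \<longrightarrow> w' \<ge> wmin \<longrightarrow>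
               (\<forall>t. \<epsilon> \<le> win_int r (deriv (sinusoid A' B' w' \<phi>')) t)"
    and "A > 0" "Bmin > 0" "B > Bmin" "w \<ge> wmin" "\<epsilon> > 0"
  shows "win_int r (deriv (sinusoid A B w \<phi>)) t > \<epsilon>"
proof -
  define B' where "B' = (B + Bmin) / 2"
  define I where "I = win_int r (deriv (sinusoid A 1 w \<phi>)) t"
  have "Bmin < B'" "B' < B"
    using assms unfolding B'_def by simp_all
  have "\<epsilon> \<le> B' * I"
    using PE[rule_format, of A B' w \<phi> t] assms \<open>Bmin < B'\<close>
      win_int_deriv_sinusoid_scale[of r A B' w \<phi> t A]
    unfolding I_def by simp
  with \<open>\<epsilon> > 0\<close> \<open>Bmin < B'\<close> \<open>Bmin > 0\<close> have "I > 0"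
    by (smt (verit) mult_nonneg_nonpos)
  with \<open>\<epsilon> \<le> B' * I\<close> \<open>B' < B\<close> have "\<epsilon> < B * I"
    by (smt (verit) mult_strict_right_mono)
  then show ?thesis
    using win_int_deriv_sinusoid_scale[of r A B w \<phi> t A] \<open>Bmin > 0\<close> \<open>B > Bmin\<close>
    unfolding I_def by simp
qed

lemma zeta_rhs_proportional:
  assumes "r \<ge> 0" and proportional: "\<And>\<tau>. x - r \<le> \<tau> \<Longrightarrow> \<tau> \<le> x \<Longrightarrow> \<bar>z4 \<tau>\<bar> = k * \<bar>z2 \<tau>\<bar>"
  shows "zeta_rhs \<alpha> \<beta> p q r \<epsilon> z2 z4 x z =
    (if win_int r z2 x > \<epsilon>
     then - (fixed_time_rate \<alpha> \<beta> p q ((z - k) * win_int r z2 x)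
             + (z - k) * (\<bar>z2 x\<bar> - \<bar>z2 (x - r)\<bar>)) / win_int r z2 x
     else - fixed_time_rate \<alpha> \<beta> p q z)"
proof -
  have "win_int r z4 x = k * win_int r z2 x"
    unfolding win_int_def by (subst integral_cong[OF proportional]) auto
  moreover have "\<bar>z4 x\<bar> = k * \<bar>z2 x\<bar>" "\<bar>z4 (x - r)\<bar> = k * \<bar>z2 (x - r)\<bar>"
    using proportional \<open>r \<ge> 0\<close> by auto
  ultimately show ?thesis
    unfolding zeta_rhs_def fixed_time_rate_def Let_def
    by (simp add: divide_inverse algebra_simps)
qed

lemma zeta_rhs_sinusoid:
  assumes "diff_states (sinusoid A B w \<phi>) r T1 z2 z4" "r \<ge> 0" "x \<ge> T1 + r"
  defines "y' \<equiv> deriv (sinusoid A B w \<phi>)"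
  shows "zeta_rhs \<alpha> \<beta> p q r \<epsilon> z2 z4 x z =
    (if win_int r y' x > \<epsilon>
     then - (fixed_time_rate \<alpha> \<beta> p q ((z - w\<^sup>2) * win_int r y' x)
             + (z - w\<^sup>2) * (\<bar>y' x\<bar> - \<bar>y' (x - r)\<bar>)) / win_int r y' x
     else - fixed_time_rate \<alpha> \<beta> p q z)"
proof -
  have exact: "z2 \<tau> = y' \<tau>" "\<bar>z4 \<tau>\<bar> = w\<^sup>2 * \<bar>z2 \<tau>\<bar>" if "\<tau> \<ge> T1" for \<tau>
    using assms(1) that abs_deriv3_sinusoid unfolding diff_states_def y'_def by auto
  have "win_int r z2 x = win_int r y' x"
    unfolding win_int_def by (rule integral_cong) (use assms(3) exact in auto)
  with zeta_rhs_proportional[of r x z4 "w\<^sup>2" z2] exact assms(2,3) show ?thesis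
    by simp
qed

lemma car_solution_settles:
  fixes f :: "real \<Rightarrow> real \<Rightarrow> real" and \<zeta> G G' :: "real \<Rightarrow> real"
  assumes sol: "car_solution f \<zeta>" and "T0 > 0"
    and "\<alpha> > 0" "\<beta> > 0" "odd p" "odd q" "q > 0"
    and deriv_G: "\<And>x. (G has_real_derivative G' x) (at x)"
    and cont_G': "continuous_on UNIV G'" and G_pos: "\<And>x. G x > 0"
    and rhs: "\<And>x z. x > T0 \<Longrightarrow>
       f x z = - (fixed_time_rate \<alpha> \<beta> p q ((z - c) * G x) + (z - c) * G' x) / G x"
    and t: "t \<ge> T0 + pi / (2 * (q / p) * sqrt (\<alpha> * \<beta>))"
  shows "\<zeta> t = c"
proof -
  define e where "e x = (\<zeta> x - c) * G x" for x
  have "p > 0"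
    using \<open>odd p\<close> by (cases p) auto
  have cont_\<zeta>: "isCont \<zeta> x" if "x \<ge> T0" for x
    using car_solution_isCont[OF sol] that \<open>T0 > 0\<close> by simp
  have cont_G: "isCont G x" for x
    using DERIV_isCont[OF deriv_G] .
  have cont_e: "isCont e x" if "x \<ge> T0" for x
    unfolding e_def[abs_def] using cont_\<zeta>[OF that] cont_G by (intro continuous_intros)
  have "(e has_real_derivative - (\<alpha> * \<bar>e x\<bar> powr (1 + q / p) + \<beta> * \<bar>e x\<bar> powr (1 - q / p))) (at x)"
    if "x > T0" "e x \<noteq> 0" for x
  proof -
    let ?rhs = "\<lambda>y. - (fixed_time_rate \<alpha> \<beta> p q (e y) + (\<zeta> y - c) * G' y) / G y"
    have "isCont e x"
      using cont_e \<open>x > T0\<close> by simp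
    from isCont_o2[OF this isCont_fixed_time_rate[OF \<open>odd p\<close> \<open>e x \<noteq> 0\<close>]]
    have "isCont (\<lambda>y. fixed_time_rate \<alpha> \<beta> p q (e y)) x" .
    moreover have "isCont G' x"
      using continuous_on_interior[OF cont_G'] by simp
    ultimately have cont_rhs: "isCont ?rhs x"
      using cont_\<zeta>[of x] cont_G[of x] G_pos[of x] \<open>x > T0\<close>
      by (intro continuous_intros) auto
    have "eventually (\<lambda>y. f y (\<zeta> y) = ?rhs y) (nhds x)"
      using eventually_nhds_in_open[of "{T0<..}" x] \<open>x > T0\<close> by (auto elim!: eventually_mono simp: rhs e_def)
    from iffD2[OF isCont_cong[OF this] cont_rhs]
    have "isCont (\<lambda>y. f y (\<zeta> y)) x" .
    from car_solution_has_derivative[OF sol _ this] \<open>x > T0\<close> \<open>T0 > 0\<close>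
    have "(\<zeta> has_real_derivative ?rhs x) (at x)"
      using rhs[of x] by (simp add: e_def)
    from DERIV_mult[OF DERIV_diff[OF this DERIV_const[of c]] deriv_G[of x]]
    have "(e has_real_derivative (?rhs x - 0) * G x + G' x * (\<zeta> x - c)) (at x)"
      unfolding e_def[abs_def] .
    moreover have "(?rhs x - 0) * G x + G' x * (\<zeta> x - c) = - fixed_time_rate \<alpha> \<beta> p q (e x)"
      using G_pos[of x] by (simp add: divide_simps)
    ultimately have "(e has_real_derivative - fixed_time_rate \<alpha> \<beta> p q (e x)) (at x)"
      by simp
    then show ?thesis
      using fixed_time_rate_eq_powr[OF \<open>odd p\<close> \<open>odd q\<close> \<open>e x \<noteq> 0\<close>] by simp
  qed
  with fixed_time_zero[of \<alpha> \<beta> "q / p" T0 e t] cont_e assms \<open>p > 0\<close>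
  have "e t = 0"
    by (simp add: continuous_at_imp_continuous_on)
  with G_pos[of t] show ?thesis
    by (simp add: e_def)
qed

lemma zeta_rhs_error_form:
  assumes PE: "\<forall>A' B' w' \<phi>'. A' > 0 \<longrightarrow> B' > Bmin \<longrightarrow> w' \<ge> wmin \<longrightarrow>
               (\<forall>t. \<epsilon> \<le> win_int r (deriv (sinusoid A' B' w' \<phi>')) t)"
    and "A > 0" "Bmin > 0" "wmin > 0" "B > Bmin" "w = 0 \<or> w \<ge> wmin" "r > 0" "\<epsilon> > 0"
  obtains G G' :: "real \<Rightarrow> real" and c
  where "\<And>x. (G has_real_derivative G' x) (at x)" "continuous_on UNIV G'" "\<And>x. G x > 0"
    and "sqrt \<bar>c\<bar> = w"
    and "\<And>z2 z4 x z. diff_states (sinusoid A B w \<phi>) r T z2 z4 \<Longrightarrow> x \<ge> T + r \<Longrightarrow>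
      zeta_rhs \<alpha> \<beta> p q r \<epsilon> z2 z4 x z
        = - (fixed_time_rate \<alpha> \<beta> p q ((z - c) * G x) + (z - c) * G' x) / G x"
proof (cases "w = 0")
  case True
  then have "win_int r (deriv (sinusoid A B w \<phi>)) x = 0" for x
    by (simp add: win_int_def deriv_sinusoid)
  with True \<open>r > 0\<close> \<open>\<epsilon> > 0\<close> show ?thesis
    using that[of "\<lambda>_. 1" "\<lambda>_. 0" 0] zeta_rhs_sinusoid by force
next
  case False
  let ?y' = "deriv (sinusoid A B w \<phi>)"
  have "w \<ge> wmin"
    using False \<open>w = 0 \<or> w \<ge> wmin\<close> by simp
  have G_gt: "win_int r ?y' x > \<epsilon>" for x
    using win_int_deriv_sinusoid_gt[OF PE] assms \<open>w \<ge> wmin\<close> by simp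
  have cont: "continuous_on UNIV (\<lambda>x. \<bar>?y' x\<bar>)"
    unfolding deriv_sinusoid by (intro continuous_intros)
  show ?thesis
  proof (rule that[of "win_int r ?y'" "\<lambda>x. \<bar>?y' x\<bar> - \<bar>?y' (x - r)\<bar>" "w\<^sup>2"])
    show "(win_int r ?y' has_real_derivative \<bar>?y' x\<bar> - \<bar>?y' (x - r)\<bar>) (at x)" for x
      unfolding win_int_def[abs_def] using window_integral_has_derivative[OF cont] \<open>r > 0\<close> by simp
    show "continuous_on UNIV (\<lambda>x. \<bar>?y' x\<bar> - \<bar>?y' (x - r)\<bar>)"
      unfolding deriv_sinusoid by (intro continuous_intros)
    show "win_int r ?y' x > 0" for x
      using G_gt[of x] \<open>\<epsilon> > 0\<close> by simp
    show "sqrt \<bar>w\<^sup>2\<bar> = w"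
      using \<open>w \<ge> wmin\<close> \<open>wmin > 0\<close> by simp
  qed (use zeta_rhs_sinusoid G_gt \<open>r > 0\<close> in simp)
qed

theorem theorem1:
  fixes A B w \<phi>0 Bmin wmin L :: real and m :: nat
    and \<alpha>1 \<beta>1 r \<epsilon> T1 :: real and p q :: nat
  assumes "A > 0" and "Bmin > 0" and "wmin > 0" and "B > Bmin"
    and "w = 0 \<or> w \<ge> wmin"
    and "L > 0" and "m \<ge> 4"
    and "\<forall>t. \<bar>(deriv ^^ m) (sinusoid A B w \<phi>0) t\<bar> \<le> L"
    and "\<alpha>1 > 0" and "\<beta>1 > 0"
    and "odd p" and "odd q" and "0 < q" and "q < 2 * p"
    and "r > 0" and "\<epsilon> > 0"
    and PE: "\<forall>A' B' w' \<phi>'. A' > 0 \<longrightarrow> B' > Bmin \<longrightarrow> w' \<ge> wmin \<longrightarrow>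
               (\<forall>t. \<epsilon> \<le> win_int r (deriv (sinusoid A' B' w' \<phi>')) t)"
  shows "\<exists>Tmax. \<forall>z2 z4 \<zeta>.
           diff_states (sinusoid A B w \<phi>0) r T1 z2 z4 \<and>
           car_solution (zeta_rhs \<alpha>1 \<beta>1 p q r \<epsilon> z2 z4) \<zeta> \<longrightarrow>
           (\<forall>t\<ge>Tmax. sqrt \<bar>\<zeta> t\<bar> = w)"
proof -
  obtain G G' :: "real \<Rightarrow> real" and c where G: "\<And>x. (G has_real_derivative G' x) (at x)"
      "continuous_on UNIV G'" "\<And>x. G x > 0" and "sqrt \<bar>c\<bar> = w"
    and rhs: "\<And>z2 z4 x z. diff_states (sinusoid A B w \<phi>0) r T1 z2 z4 \<Longrightarrow> x \<ge> T1 + r \<Longrightarrow>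
      zeta_rhs \<alpha>1 \<beta>1 p q r \<epsilon> z2 z4 x z
        = - (fixed_time_rate \<alpha>1 \<beta>1 p q ((z - c) * G x) + (z - c) * G' x) / G x"
    using zeta_rhs_error_form[OF PE assms(1-5) \<open>r > 0\<close> \<open>\<epsilon> > 0\<close>,
        where \<phi> = \<phi>0 and T = T1 and \<alpha> = \<alpha>1 and \<beta> = \<beta>1] by blast
  define T0 where "T0 = max T1 0 + r"
  have "T0 > 0"
    using \<open>r > 0\<close> by (simp add: T0_def)
  show ?thesis
  proof (intro exI[of _ "T0 + pi / (2 * (q / p) * sqrt (\<alpha>1 * \<beta>1))"] allI impI)
    fix z2 z4 \<zeta> t
    assume "diff_states (sinusoid A B w \<phi>0) r T1 z2 z4 \<and>
        car_solution (zeta_rhs \<alpha>1 \<beta>1 p q r \<epsilon> z2 z4) \<zeta>"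
      and "t \<ge> T0 + pi / (2 * (q / p) * sqrt (\<alpha>1 * \<beta>1))"
    with car_solution_settles[OF _ \<open>T0 > 0\<close> \<open>\<alpha>1 > 0\<close> \<open>\<beta>1 > 0\<close> \<open>odd p\<close> \<open>odd q\<close> \<open>0 < q\<close> G]
      rhs[of z2 z4] have "\<zeta> t = c"
      unfolding T0_def by fastforce
    with \<open>sqrt \<bar>c\<bar> = w\<close> show "sqrt \<bar>\<zeta> t\<bar> = w"
      by simp
  qed
qed

end
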